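(* Let $\mu\in\mathbb{R}$, $\sigma>0$, $\mathbb{L}>0$, $\varepsilon>0$, $c=\frac{\sigma^2+1}{\sigma^2}$, and let $n\in\mathbb{N}\cup\{0\}$ with $n<\frac{2\pi^2}{\mathbb{L}^2\varepsilon^2c}$. For either choice of sign $\pm$ the following hold. If $\sigma^2\neq1$, $$\sum_{k=1}^\infty\left|\int_\mathbb{R}\psi_n(x)e^{-\frac{(x-\mu)^2}{2\sigma^2}\pm i\frac{2\pi}{\mathbb{L}}k\frac x\varepsilon}\,\mathrm{d}x\right|\le C(n,\sigma^2)e^{-\frac{2\pi^2}{\mathbb{L}^2\varepsilon^2c}}\Bigg[\left(2^{n/2}n^{n/2}\left|\frac2c-1\right|^{n/2}+2^{n-1}\left(\frac{|\mu|}{c\sigma^2}\right)^n\right)\left(1+\frac{\mathbb{L}^2\varepsilon^2c}{4\pi^2}\right)+2^{n-1}\left(\frac{2\pi}{\mathbb{L}\varepsilon c}\right)^n\left(1+\frac12e^{n-1}\right)\Bigg],$$ where $C(n,\sigma^2)=\frac{\pi^{1/4}4^n\left(1+\frac n2\right)e^{-\frac{\mu^2}{2\sigma^2}+\frac{\mu^2}{2c\sigma^4}}}{\sqrt{c\cdot2^{n-1}n!}}$. If $\sigma^2=1$, $$\sum_{k=1}^\infty\left|\int_\mathbb{R}\psi_n(x)e^{-\frac{(x-\mu)^2}{2\sigma^2}\pm i\frac{2\pi}{\mathbb{L}}k\frac x\varepsilon}\,\mathrm{d}x\right|\le\frac{\pi^{1/4}2^{n-1}e^{-\frac{\mu^2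}{4}}}{\sqrt{2^nn!}}e^{-\frac{\pi^2}{\mathbb{L}^2\varepsilon^2}}\left(|\mu|^n\left(1+\frac{\mathbb{L}^2\varepsilon^2}{2\pi^2}\right)+\left(\frac{2\pi}{\mathbb{L}\varepsilon}\right)^n\left(1+\frac12e^{n-1}\right)\right).$$
   Context: $H_n$ is the $n$-th physicist's Hermite polynomial and $\psi_n(x)=\frac{1}{\sqrt{\sqrt\pi\,2^n n!}}e^{-x^2/2}H_n(x)$ are the Hermite functions. The convention $0^0:=1$ is used. *)

theory Defs
  imports "HOL-Analysis.Analysis"
begin

fun hermite :: "nat \<Rightarrow> real \<Rightarrow> real" where
  "hermite 0 x = 1"
| "hermite (Suc 0) x = 2 * x"
| "hermite (Suc (Suc n)) x = 2 * x * hermite (Suc n) x - 2 * real (Suc n) * hermite n x"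

definition hermite_fun :: "nat \<Rightarrow> real \<Rightarrow> real" where
  "hermite_fun n x = exp (- x\<^sup>2 / 2) * hermite n x / sqrt (sqrt pi * 2 ^ n * fact n)"

definition gauss_fourier_coeff ::
  "nat \<Rightarrow> real \<Rightarrow> real \<Rightarrow> real \<Rightarrow> real \<Rightarrow> real \<Rightarrow> nat \<Rightarrow> complex" where
  "gauss_fourier_coeff n \<mu> \<sigma> L \<epsilon> s k =
     integral\<^sup>L lborel (\<lambda>x::real.
        complex_of_real (hermite_fun n x * exp (- (x - \<mu>)\<^sup>2 / (2 * \<sigma>\<^sup>2)))
        * exp (\<i> * complex_of_real (s * (2 * pi / L) * real k * (x / \<epsilon>))))"

end

theory Submission
  imports Defs "HOL-Probability.Characteristic_Functions" "HOL-Real_Asymp.Real_Asymp"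
begin

(* Completing the square, the k-th integral is a constant times the moment
   J_n(w) = integral of H_n(x) exp(-c x^2/2 + w x) over the real line, where
   w = mu/sigma^2 + i s 2 pi k/(L eps).  The derivative of H_n(x) exp(-c x^2/2 + w x)
   integrates to zero, which yields J_(n+1) = (2w/c) J_n + 2n (2/c - 1) J_(n-1); hence
   J_n = R_n J_0 for a Hermite-type polynomial R_n in p = 2w/c and q = 2/c - 1, while
   J_0 = sqrt (2 pi/c) exp (w^2/(2c)) is the Fourier transform of a Gaussian.  So the
   k-th term is exp (-a k^2), a = 2 pi^2/(L^2 eps^2 c), times |R_n| <= (|p| + sqrt (2n|q|))^n,
   which grows like k^n.  Comparing with geometric series, where n < a absorbs the factor
   k^n, gives both bounds; for sigma^2 = 1 we have q = 0 and R_n = p^n. *)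

lemma hermite_Suc: "hermite (Suc n) x = 2 * x * hermite n x - 2 * real n * hermite (n - 1) x"
  by (cases n) auto

lemma hermite_has_real_derivative:
  "(hermite n has_real_derivative 2 * real n * hermite (n - 1) x) (at x)"
proof (induction n x rule: hermite.induct)
  case (1 x)
  have "hermite 0 = (\<lambda>_. 1)"
    by (simp add: fun_eq_iff)
  then show ?case
    by simp
next
  case (2 x)
  have "hermite (Suc 0) = (\<lambda>x. 2 * x)"
    by (simp add: fun_eq_iff)
  then show ?case
    by (auto intro!: derivative_eq_intros)
next
  case (3 n x)
  have "hermite (Suc (Suc n)) = (\<lambda>x. 2 * x * hermite (Suc n) x - 2 * real (Suc n) * hermite n x)"
    by (simp add: fun_eq_iff)
  moreover have "((\<lambda>x. 2 * x * hermite (Suc n) x - 2 * real (Suc n) * hermite n x)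
      has_real_derivative 2 * hermite (Suc n) x + 2 * x * (2 * real (Suc n) * hermite n x)
        - 2 * real (Suc n) * (2 * real n * hermite (n - 1) x)) (at x)"
    using 3 by (auto intro!: derivative_eq_intros)
  moreover have "2 * hermite (Suc n) x + 2 * x * (2 * real (Suc n) * hermite n x)
        - 2 * real (Suc n) * (2 * real n * hermite (n - 1) x)
      = 2 * real (Suc (Suc n)) * hermite (Suc n) x"
    by (simp add: hermite_Suc[of n] algebra_simps)
  ultimately show ?case
    by simp
qed

lemma continuous_on_hermite: "continuous_on A (hermite n)"
  by (meson DERIV_continuous continuous_at_imp_continuous_on hermite_has_real_derivative)

lemma abs_hermite_le: "\<bar>hermite n x\<bar> \<le> 4 ^ n * fact n * exp \<bar>x\<bar> ^ n"
proof (induction n x rule: hermite.induct)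
  case (2 x)
  have "\<bar>x\<bar> \<le> exp \<bar>x\<bar>"
    using exp_ge_add_one_self[of "\<bar>x\<bar>"] by linarith
  then show ?case
    by (simp add: abs_mult)
next
  case (3 n x)
  define E where "E = exp \<bar>x\<bar>"
  have E: "1 \<le> E" "\<bar>x\<bar> \<le> E"
    using exp_ge_add_one_self[of "\<bar>x\<bar>"] unfolding E_def by linarith+
  define M where "M = 4 ^ n * fact (Suc n) * E ^ Suc (Suc n)"
  have "\<bar>hermite (Suc (Suc n)) x\<bar> \<le> 2 * \<bar>x\<bar> * \<bar>hermite (Suc n) x\<bar> + 2 * real (Suc n) * \<bar>hermite n x\<bar>"
    by (simp add: abs_mult abs_triangle_ineq4[THEN order_trans])
  also have "\<dots> \<le> 2 * E * (4 ^ Suc n * fact (Suc n) * E ^ Suc n)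
      + 2 * real (Suc n) * (4 ^ n * fact n * E ^ Suc (Suc n))"
  proof (intro add_mono mult_mono mult_left_mono)
    show "\<bar>hermite n x\<bar> \<le> 4 ^ n * fact n * E ^ Suc (Suc n)"
      using 3(2) power_increasing[of n "Suc (Suc n)" E] E by (auto simp: E_def intro: order_trans)
  qed (use 3(1) E in \<open>auto simp: E_def\<close>)
  also have "\<dots> = 10 * M"
    by (simp add: M_def algebra_simps)
  also have "\<dots> \<le> 16 * real (Suc (Suc n)) * M"
    by (intro mult_right_mono) (auto simp: M_def E_def)
  also have "\<dots> = 4 ^ Suc (Suc n) * fact (Suc (Suc n)) * E ^ Suc (Suc n)"
    by (simp add: M_def algebra_simps)
  finally show ?case
    by (simp add: E_def)
qed simp

section \<open>Gaussian integrals\<close>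

lemma std_normal_density_iexp_integral:
  shows "integrable lborel (\<lambda>x. std_normal_density x *\<^sub>R iexp (t * x))"
    and "(\<integral>x. std_normal_density x *\<^sub>R iexp (t * x) \<partial>lborel) = of_real (exp (- t\<^sup>2 / 2))"
proof -
  show "integrable lborel (\<lambda>x. std_normal_density x *\<^sub>R iexp (t * x))"
    by (rule Bochner_Integration.integrable_bound[where f = std_normal_density])
       (auto intro!: measurable_completion)
  have "char std_normal_distribution t = of_real (exp (- t\<^sup>2 / 2))"
    by (simp add: char_std_normal_distribution)
  then show "(\<integral>x. std_normal_density x *\<^sub>R iexp (t * x) \<partial>lborel) = of_real (exp (- t\<^sup>2 / 2))"
    unfolding char_def by (subst (asm) integral_density) auto
qed

definition gauss_exp :: "real \<Rightarrow> complex \<Rightarrow> real \<Rightarrow> complex" where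
  "gauss_exp c w x = exp (of_real (- c * x\<^sup>2 / 2) + w * of_real x)"

lemma norm_gauss_exp: "norm (gauss_exp c w x) = exp (- c * x\<^sup>2 / 2 + Re w * x)"
  by (simp add: gauss_exp_def)

lemma gauss_exp_Complex:
  "gauss_exp c (Complex b \<theta>) x = of_real (exp (- c * x\<^sup>2 / 2 + b * x)) * exp (\<i> * of_real (\<theta> * x))"
proof -
  have "of_real (- c * x\<^sup>2 / 2) + Complex b \<theta> * of_real x
      = of_real (- c * x\<^sup>2 / 2 + b * x) + \<i> * of_real (\<theta> * x)"
    by (simp add: complex_eq_iff)
  then show ?thesis
    unfolding gauss_exp_def by (simp only: exp_add exp_of_real)
qed

lemma continuous_on_gauss_exp: "continuous_on A (gauss_exp c w)"
  unfolding gauss_exp_def by (intro continuous_intros) auto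

lemma gauss_exp_has_vector_derivative:
  "(gauss_exp c w has_vector_derivative gauss_exp c w x * (w - of_real (c * x))) (at x)"
proof -
  define g where "g z = exp (- of_real c * z\<^sup>2 / 2 + w * z)" for z
  have "gauss_exp c w = (\<lambda>x. g (of_real x))"
    by (simp add: fun_eq_iff gauss_exp_def g_def)
  moreover have "(g has_field_derivative g (of_real x) * (w - of_real (c * x))) (at (of_real x))"
    unfolding g_def by (auto intro!: derivative_eq_intros simp: algebra_simps)
  ultimately show ?thesis
    by (simp add: has_vector_derivative_real_field)
qed

lemma gauss_exp_affine_substitution:
  fixes c b \<beta> y :: real
  assumes "c > 0"
  shows "gauss_exp c (Complex b \<beta>) (b / c + y / sqrt c) =
    (of_real (sqrt (2 * pi) * exp (b\<^sup>2 / (2 * c))) * exp (\<i> * of_real (\<beta> * b / c))) *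
      (std_normal_density y *\<^sub>R iexp (\<beta> / sqrt c * y))"
proof -
  have "(of_real (sqrt (2 * pi) * exp (b\<^sup>2 / (2 * c))) * exp (\<i> * of_real (\<beta> * b / c))) *
      (std_normal_density y *\<^sub>R iexp (\<beta> / sqrt c * y))
     = of_real (exp (b\<^sup>2 / (2 * c))) * exp (\<i> * of_real (\<beta> * b / c)) *
       of_real (exp (- y\<^sup>2 / 2)) * iexp (\<beta> / sqrt c * y)"
    by (simp add: std_normal_density_def scaleR_conv_of_real field_simps)
  also have "\<dots> = exp (of_real (b\<^sup>2 / (2 * c)) + \<i> * of_real (\<beta> * b / c) +
       of_real (- y\<^sup>2 / 2) + \<i> * of_real (\<beta> / sqrt c * y))"
    by (simp only: exp_of_real[symmetric] exp_add)
  also have "of_real (b\<^sup>2 / (2 * c)) + \<i> * of_real (\<beta> * b / c) +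
       of_real (- y\<^sup>2 / 2) + \<i> * of_real (\<beta> / sqrt c * y)
     = of_real (- c * (b / c + y / sqrt c)\<^sup>2 / 2) + Complex b \<beta> * of_real (b / c + y / sqrt c)"
    using assms by (simp add: complex_eq_iff field_simps power2_eq_square)
  finally show ?thesis
    unfolding gauss_exp_def by simp
qed

lemma
  fixes c :: real and w :: complex
  assumes c: "c > 0"
  shows integrable_gauss_exp: "integrable lborel (gauss_exp c w)"
    and integral_gauss_exp: "(\<integral>x. gauss_exp c w x \<partial>lborel) = of_real (sqrt (2 * pi / c)) * exp (w\<^sup>2 / (2 * c))"
proof -
  define r where "r = sqrt c"
  have r: "r > 0" "r\<^sup>2 = c"
    using c by (auto simp: r_def)
  obtain b \<beta> where w: "w = Complex b \<beta>"
    using complex.exhaust by blast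
  define K where "K = of_real (sqrt (2 * pi) * exp (b\<^sup>2 / (2 * c))) * exp (\<i> * of_real (\<beta> * b / c))"
  have subst: "(\<lambda>y. gauss_exp c w (b / c + (1 / r) * y))
      = (\<lambda>y. K * (std_normal_density y *\<^sub>R iexp (\<beta> / r * y)))"
    using gauss_exp_affine_substitution[OF c] by (simp add: w K_def r_def)
  have "integrable lborel (\<lambda>y. gauss_exp c w (b / c + (1 / r) * y))"
    unfolding subst by (intro integrable_mult_right std_normal_density_iexp_integral)
  then show "integrable lborel (gauss_exp c w)"
    using lborel_integrable_real_affine_iff[of "1 / r" "gauss_exp c w" "b / c"] r by simp
  have "(\<integral>x. gauss_exp c w x \<partial>lborel) = (1 / r) *\<^sub>R (\<integral>y. gauss_exp c w (b / c + (1 / r) * y) \<partial>lborel)"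
    using lborel_integral_real_affine[of "1 / r" "gauss_exp c w" "b / c"] r by simp
  also have "\<dots> = (1 / r) *\<^sub>R (K * of_real (exp (- (\<beta> / r)\<^sup>2 / 2)))"
    unfolding subst integral_mult_right_zero std_normal_density_iexp_integral(2) by simp
  also have "\<dots> = of_real (sqrt (2 * pi / c)) * exp (w\<^sup>2 / (2 * c))"
  proof -
    have "w\<^sup>2 / (2 * c) = of_real ((b\<^sup>2 - \<beta>\<^sup>2) / (2 * c)) + \<i> * of_real (\<beta> * b / c)"
      using c by (simp add: w complex_eq_iff power2_eq_square field_simps)
    then have e: "exp (w\<^sup>2 / (2 * c)) = of_real (exp ((b\<^sup>2 - \<beta>\<^sup>2) / (2 * c))) * exp (\<i> * of_real (\<beta> * b / c))"
      by (simp only: exp_add exp_of_real)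
    have s: "sqrt (2 * pi / c) = sqrt (2 * pi) / r"
      by (simp add: r_def real_sqrt_divide)
    have x: "exp (b\<^sup>2 / (2 * c)) * exp (- (\<beta> / r)\<^sup>2 / 2) = exp ((b\<^sup>2 - \<beta>\<^sup>2) / (2 * c))"
      using r c by (simp add: exp_add[symmetric] field_simps)
    show ?thesis
      unfolding e s K_def scaleR_conv_of_real using x[symmetric] by (simp add: field_simps)
  qed
  finally show "(\<integral>x. gauss_exp c w x \<partial>lborel) = of_real (sqrt (2 * pi / c)) * exp (w\<^sup>2 / (2 * c))" .
qed

section \<open>A two-parameter Hermite recurrence\<close>

lemma power_add_le_two_powr:
  fixes x y :: real
  assumes "0 \<le> x" "0 \<le> y"
  shows "(x + y) ^ n \<le> 2 powr (real n - 1) * (x ^ n + y ^ n)"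
proof -
  have "convex_on {0..} (\<lambda>x::real. x ^ n)"
    by (cases "even n") (auto intro: convex_on_subset[OF convex_power_even] convex_power_odd)
  then have "((x + y) / 2) ^ n \<le> (x ^ n + y ^ n) / 2"
    using convex_onD[of "{0..}" "\<lambda>x::real. x ^ n" "1 / 2" x y] assms by (simp add: field_simps)
  then have "(x + y) ^ n \<le> 2 ^ n / 2 * (x ^ n + y ^ n)"
    by (simp add: field_simps)
  then show ?thesis
    by (simp add: powr_diff powr_realpow)
qed

text \<open>\<open>gen_hermite (2 * of_real x) (-1) n = of_real (hermite n x)\<close>.\<close>
fun gen_hermite :: "complex \<Rightarrow> real \<Rightarrow> nat \<Rightarrow> complex" where
  "gen_hermite p q 0 = 1"
| "gen_hermite p q (Suc 0) = p"
| "gen_hermite p q (Suc (Suc n)) = p * gen_hermite p q (Suc n) + of_real (2 * real (Suc n) * q) * gen_hermite p q n"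

lemma gen_hermite_zero: "gen_hermite p 0 n = p ^ n"
  by (induction p "0::real" n rule: gen_hermite.induct) auto

lemma norm_gen_hermite_le:
  assumes s: "0 \<le> s" "2 * real N * \<bar>q\<bar> \<le> s\<^sup>2" and "n \<le> N"
  shows "norm (gen_hermite p q n) \<le> (norm p + s) ^ n"
  using \<open>n \<le> N\<close>
proof (induction n rule: induct_nat_012)
  case (ge2 n)
  let ?u = "norm p + s"
  have "2 * real (Suc n) * \<bar>q\<bar> \<le> 2 * real N * \<bar>q\<bar>"
    using "ge2.prems" by (intro mult_right_mono) auto
  then have q: "2 * real (Suc n) * \<bar>q\<bar> \<le> s\<^sup>2"
    using s(2) by (rule order_trans)
  have "norm (gen_hermite p q (Suc (Suc n)))
      \<le> norm (p * gen_hermite p q (Suc n)) + norm (of_real (2 * real (Suc n) * q) * gen_hermite p q n)"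
    by (simp only: gen_hermite.simps norm_triangle_ineq)
  also have "\<dots> = norm p * norm (gen_hermite p q (Suc n)) + 2 * real (Suc n) * \<bar>q\<bar> * norm (gen_hermite p q n)"
    by (simp only: norm_mult norm_of_real abs_mult abs_of_nonneg[of "2 * real (Suc n)"])
  also have "\<dots> \<le> norm p * ?u ^ Suc n + s\<^sup>2 * ?u ^ n"
    using "ge2.IH" "ge2.prems" q by (intro add_mono mult_mono mult_left_mono) auto
  also have "\<dots> = (norm p * ?u + s\<^sup>2) * ?u ^ n"
    by (simp add: algebra_simps)
  also have "\<dots> \<le> ?u\<^sup>2 * ?u ^ n"
    using s by (intro mult_right_mono) (auto simp: power2_eq_square algebra_simps)
  finally show ?case
    by (simp add: power2_eq_square)
qed (use s in auto)

text \<open>The constant \<open>4 ^ n * (1 + n / 2)\<close> is generous (\<open>2 ^ (2 * n - 1)\<close> would do); it is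
  the one appearing in the final bound.\<close>
lemma norm_gen_hermite_le_split:
  assumes p: "norm p \<le> 2 * (b\<^sub>1 + b\<^sub>2)" and b: "0 \<le> b\<^sub>1" "0 \<le> b\<^sub>2"
  shows "norm (gen_hermite p q n) \<le> 4 ^ n * (1 + real n / 2) *
    (sqrt 2 ^ n * sqrt (real n) ^ n * sqrt \<bar>q\<bar> ^ n
      + 2 powr (real n - 1) * b\<^sub>1 ^ n + 2 powr (real n - 1) * b\<^sub>2 ^ n)"
proof -
  define s where "s = sqrt (2 * real n * \<bar>q\<bar>)"
  define t :: real where "t = 2 ^ n / 2"
  define K :: real where "K = 4 ^ n * (1 + real n / 2)"
  have t: "2 powr (real n - 1) = t"
    by (simp add: t_def powr_diff powr_realpow)
  have "t \<le> 2 ^ n"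
    by (simp add: t_def)
  also have "\<dots> \<le> 4 ^ n"
    by (rule power_mono) auto
  also have "\<dots> \<le> K"
    by (simp add: K_def)
  finally have "t \<le> K" .
  moreover have "2 ^ n * t \<le> K"
    by (simp add: t_def K_def power_mult_distrib[symmetric])
  moreover have "0 \<le> s" "0 \<le> t"
    by (simp_all add: s_def t_def)
  moreover have "norm (gen_hermite p q n) \<le> t * s ^ n + 2 ^ n * t * (t * b\<^sub>1 ^ n + t * b\<^sub>2 ^ n)"
  proof -
    have "norm (gen_hermite p q n) \<le> (norm p + s) ^ n"
      by (rule norm_gen_hermite_le) (auto simp: s_def)
    also have "\<dots> \<le> t * (norm p ^ n + s ^ n)"
      using power_add_le_two_powr[of "norm p" s n] by (simp add: s_def t)
    also have "norm p ^ n \<le> 2 ^ n * (b\<^sub>1 + b\<^sub>2) ^ n"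
      using power_mono[OF p, of n] by (simp only: power_mult_distrib norm_ge_zero)
    also have "(b\<^sub>1 + b\<^sub>2) ^ n \<le> t * (b\<^sub>1 ^ n + b\<^sub>2 ^ n)"
      using power_add_le_two_powr[OF b, of n] by (simp add: t)
    finally show ?thesis
      by (simp add: t_def field_simps)
  qed
  ultimately have "norm (gen_hermite p q n) \<le> K * (s ^ n + t * b\<^sub>1 ^ n + t * b\<^sub>2 ^ n)"
    using b by (smt (verit) distrib_left mult_right_mono zero_le_power mult_nonneg_nonneg)
  moreover have "s ^ n = sqrt 2 ^ n * sqrt (real n) ^ n * sqrt \<bar>q\<bar> ^ n"
    by (simp add: s_def real_sqrt_mult power_mult_distrib)
  ultimately show ?thesis
    by (simp add: K_def t)
qed

section \<open>Hermite moments of a complex Gaussian\<close>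

definition hermite_gauss :: "real \<Rightarrow> complex \<Rightarrow> nat \<Rightarrow> real \<Rightarrow> complex" where
  "hermite_gauss c w n x = of_real (hermite n x) * gauss_exp c w x"

definition hermite_gauss_moment :: "real \<Rightarrow> complex \<Rightarrow> nat \<Rightarrow> complex" where
  "hermite_gauss_moment c w n = (\<integral>x. hermite_gauss c w n x \<partial>lborel)"

lemma continuous_on_hermite_gauss: "continuous_on A (hermite_gauss c w n)"
  unfolding hermite_gauss_def[abs_def]
  by (intro continuous_intros continuous_on_hermite continuous_on_gauss_exp)

lemma norm_hermite_gauss_le:
  "norm (hermite_gauss c w n x) \<le> 4 ^ n * fact n * exp ((real n + \<bar>Re w\<bar>) * \<bar>x\<bar> - c * x\<^sup>2 / 2)"
proof -
  have "Re w * x \<le> \<bar>Re w\<bar> * \<bar>x\<bar>"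
    by (metis abs_ge_self abs_mult)
  then have "norm (hermite_gauss c w n x) \<le> 4 ^ n * fact n * exp \<bar>x\<bar> ^ n * exp (\<bar>Re w\<bar> * \<bar>x\<bar> - c * x\<^sup>2 / 2)"
    unfolding hermite_gauss_def norm_mult norm_of_real norm_gauss_exp
    by (intro mult_mono abs_hermite_le) auto
  also have "\<dots> = 4 ^ n * fact n * exp ((real n + \<bar>Re w\<bar>) * \<bar>x\<bar> - c * x\<^sup>2 / 2)"
    by (simp add: exp_of_nat_mult[symmetric] exp_add[symmetric] algebra_simps)
  finally show ?thesis .
qed

lemma integrable_exp_abs_gauss:
  fixes \<beta> c :: real
  assumes "c > 0"
  shows "integrable lborel (\<lambda>x. exp (\<beta> * \<bar>x\<bar> - c * x\<^sup>2 / 2))"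
proof (rule Bochner_Integration.integrable_bound)
  show "integrable lborel (\<lambda>x. norm (gauss_exp c \<beta> x) + norm (gauss_exp c (- \<beta>) x))"
    using integrable_gauss_exp[OF assms] by (intro Bochner_Integration.integrable_add integrable_norm)
  have "norm (exp (\<beta> * \<bar>x\<bar> - c * x\<^sup>2 / 2))
      \<le> norm (norm (gauss_exp c \<beta> x) + norm (gauss_exp c (- \<beta>) x))" for x
    by (cases "0 \<le> x") (simp_all add: norm_gauss_exp add_increasing add_increasing2)
  then show "AE x in lborel. norm (exp (\<beta> * \<bar>x\<bar> - c * x\<^sup>2 / 2))
      \<le> norm (norm (gauss_exp c \<beta> x) + norm (gauss_exp c (- \<beta>) x))"
    by (rule AE_I2)
qed measurable

lemma integrable_hermite_gauss:
  assumes "c > 0"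
  shows "integrable lborel (hermite_gauss c w n)"
proof (rule Bochner_Integration.integrable_bound)
  show "integrable lborel (\<lambda>x. 4 ^ n * fact n * exp ((real n + \<bar>Re w\<bar>) * \<bar>x\<bar> - c * x\<^sup>2 / 2))"
    using integrable_exp_abs_gauss[OF assms] by (rule integrable_mult_right)
  show "AE x in lborel. norm (hermite_gauss c w n x)
      \<le> norm (4 ^ n * fact n * exp ((real n + \<bar>Re w\<bar>) * \<bar>x\<bar> - c * x\<^sup>2 / 2))"
    using norm_hermite_gauss_le by (intro AE_I2) (simp add: order_trans)
qed (simp add: borel_measurable_continuous_onI continuous_on_hermite_gauss)

lemma hermite_gauss_tendsto_zero:
  assumes "c > 0"
  shows "(hermite_gauss c w n \<longlongrightarrow> 0) at_top" and "(hermite_gauss c w n \<longlongrightarrow> 0) at_bot"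
proof -
  define \<beta> where "\<beta> = real n + \<bar>Re w\<bar>"
  have bound: "eventually (\<lambda>x. norm (hermite_gauss c w n x) \<le> 4 ^ n * fact n * exp (\<beta> * \<bar>x\<bar> - c * x\<^sup>2 / 2)) F"
    for F
    unfolding \<beta>_def by (intro always_eventually allI norm_hermite_gauss_le)
  have "((\<lambda>x. exp (\<beta> * \<bar>x\<bar> - c * x\<^sup>2 / 2)) \<longlongrightarrow> 0) at_top"
    using assms by real_asymp
  then show "(hermite_gauss c w n \<longlongrightarrow> 0) at_top"
    by (intro Lim_null_comparison[OF bound] tendsto_mult_right_zero)
  have "((\<lambda>x. exp (\<beta> * \<bar>x\<bar> - c * x\<^sup>2 / 2)) \<longlongrightarrow> 0) at_bot"
    using assms by real_asymp
  then show "(hermite_gauss c w n \<longlongrightarrow> 0) at_bot"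
    by (intro Lim_null_comparison[OF bound] tendsto_mult_right_zero)
qed

lemma integral_eq_zero_if_primitive_vanishes:
  fixes F f :: "real \<Rightarrow> complex"
  assumes "\<And>x. (F has_vector_derivative f x) (at x)" and "continuous_on UNIV f"
    and "integrable lborel f" and "(F \<longlongrightarrow> 0) at_top" and "(F \<longlongrightarrow> 0) at_bot"
  shows "(\<integral>x. f x \<partial>lborel) = 0"
proof -
  have "(LBINT x=-\<infinity>..\<infinity>. f x) = 0 - 0"
  proof (rule interval_integral_FTC_integrable[where F = F])
    show "set_integrable lborel (einterval (-\<infinity>) \<infinity>) f"
      using assms(3) by (simp add: set_integrable_def einterval_def)
    show "((F \<circ> real_of_ereal) \<longlongrightarrow> 0) (at_right (-\<infinity>))"
      using assms(5) by (simp add: ereal_tendsto_simps1)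
    show "((F \<circ> real_of_ereal) \<longlongrightarrow> 0) (at_left \<infinity>)"
      using assms(4) by (simp add: ereal_tendsto_simps1)
  qed (use assms(1,2) in \<open>auto simp: continuous_on_eq_continuous_at\<close>)
  then show ?thesis
    by (simp add: interval_lebesgue_integral_def set_lebesgue_integral_def einterval_def)
qed

lemma hermite_gauss_has_vector_derivative:
  "(hermite_gauss c w n has_vector_derivative
      w * hermite_gauss c w n x + of_real (real n * (2 - c)) * hermite_gauss c w (n - 1) x
      - of_real (c / 2) * hermite_gauss c w (Suc n) x) (at x)"
proof -
  let ?G = "gauss_exp c w x"
  have "(hermite_gauss c w n has_vector_derivative
      of_real (hermite n x) * (?G * (w - of_real (c * x))) + of_real (2 * real n * hermite (n - 1) x) * ?G) (at x)"
    unfolding hermite_gauss_def[abs_def]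
    by (rule has_vector_derivative_mult[OF has_vector_derivative_of_real[OF hermite_has_real_derivative]
          gauss_exp_has_vector_derivative])
  moreover have "of_real (hermite n x) * (?G * (w - of_real (c * x))) + of_real (2 * real n * hermite (n - 1) x) * ?G
      = ?G * (of_real (hermite n x) * w + of_real (2 * real n * hermite (n - 1) x - c * x * hermite n x))"
    by (simp add: algebra_simps)
  also have "2 * real n * hermite (n - 1) x - c * x * hermite n x
      = real n * (2 - c) * hermite (n - 1) x - c / 2 * hermite (Suc n) x"
    by (simp add: hermite_Suc algebra_simps)
  also have "?G * (of_real (hermite n x) * w + of_real (real n * (2 - c) * hermite (n - 1) x - c / 2 * hermite (Suc n) x))
      = w * hermite_gauss c w n x + of_real (real n * (2 - c)) * hermite_gauss c w (n - 1) x
        - of_real (c / 2) * hermite_gauss c w (Suc n) x"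
    by (simp add: hermite_gauss_def algebra_simps)
  ultimately show ?thesis
    by simp
qed

lemma hermite_gauss_moment_Suc:
  assumes c: "c > 0"
  shows "hermite_gauss_moment c w (Suc n) = 2 * w / of_real c * hermite_gauss_moment c w n
    + of_real (2 * real n * (2 / c - 1)) * hermite_gauss_moment c w (n - 1)"
proof -
  let ?HG = "hermite_gauss c w"
  have int: "integrable lborel (?HG m)" for m
    using integrable_hermite_gauss[OF c] .
  have "(\<integral>x. w * ?HG n x + of_real (real n * (2 - c)) * ?HG (n - 1) x - of_real (c / 2) * ?HG (Suc n) x \<partial>lborel) = 0"
    using hermite_gauss_tendsto_zero[OF c]
    by (intro integral_eq_zero_if_primitive_vanishes[OF hermite_gauss_has_vector_derivative]
        continuous_intros continuous_on_hermite_gauss Bochner_Integration.integrable_diff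
        Bochner_Integration.integrable_add integrable_mult_right int)
  then have "w * hermite_gauss_moment c w n + of_real (real n * (2 - c)) * hermite_gauss_moment c w (n - 1)
      = of_real (c / 2) * hermite_gauss_moment c w (Suc n)"
    by (simp add: hermite_gauss_moment_def int)
  then show ?thesis
    using c by (simp add: field_simps)
qed

lemma hermite_gauss_moment_eq_gen_hermite:
  assumes c: "c > 0"
  shows "hermite_gauss_moment c w n = gen_hermite (2 * w / of_real c) (2 / c - 1) n * hermite_gauss_moment c w 0"
proof (induction n rule: induct_nat_012)
  case (ge2 n)
  then show ?case
    using hermite_gauss_moment_Suc[OF c, of w "Suc n"] by (simp add: algebra_simps)
qed (simp_all add: hermite_gauss_moment_Suc[OF c, of w 0])

lemma hermite_gauss_moment_0:
  assumes "c > 0"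
  shows "hermite_gauss_moment c w 0 = of_real (sqrt (2 * pi / c)) * exp (w\<^sup>2 / (2 * c))"
  using integral_gauss_exp[OF assms] by (simp add: hermite_gauss_moment_def hermite_gauss_def)

lemma gauss_fourier_coeff_eq_moment:
  assumes \<sigma>: "\<sigma> > 0" and c: "c = (\<sigma>\<^sup>2 + 1) / \<sigma>\<^sup>2"
  shows "gauss_fourier_coeff n \<mu> \<sigma> L \<epsilon> s m =
    of_real (exp (- \<mu>\<^sup>2 / (2 * \<sigma>\<^sup>2)) / sqrt (sqrt pi * 2 ^ n * fact n)) *
    hermite_gauss_moment c (Complex (\<mu> / \<sigma>\<^sup>2) (s * (2 * pi / L) * real m / \<epsilon>)) n"
proof -
  define D where "D = sqrt (sqrt pi * 2 ^ n * fact n)"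
  define \<theta> where "\<theta> = s * (2 * pi / L) * real m / \<epsilon>"
  have "of_real (hermite_fun n x * exp (- (x - \<mu>)\<^sup>2 / (2 * \<sigma>\<^sup>2))) *
        exp (\<i> * of_real (s * (2 * pi / L) * real m * (x / \<epsilon>)))
     = of_real (exp (- \<mu>\<^sup>2 / (2 * \<sigma>\<^sup>2)) / D) * hermite_gauss c (Complex (\<mu> / \<sigma>\<^sup>2) \<theta>) n x" for x
  proof -
    have "- x\<^sup>2 / 2 + - (x - \<mu>)\<^sup>2 / (2 * \<sigma>\<^sup>2) = - \<mu>\<^sup>2 / (2 * \<sigma>\<^sup>2) + (- c * x\<^sup>2 / 2 + \<mu> / \<sigma>\<^sup>2 * x)"
      using \<sigma> unfolding c by (simp add: field_simps power2_eq_square)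
    then have "hermite_fun n x * exp (- (x - \<mu>)\<^sup>2 / (2 * \<sigma>\<^sup>2))
        = exp (- \<mu>\<^sup>2 / (2 * \<sigma>\<^sup>2)) / D * hermite n x * exp (- c * x\<^sup>2 / 2 + \<mu> / \<sigma>\<^sup>2 * x)"
      unfolding hermite_fun_def D_def by (simp add: exp_add[symmetric])
    moreover have "s * (2 * pi / L) * real m * (x / \<epsilon>) = \<theta> * x"
      by (simp add: \<theta>_def)
    ultimately show ?thesis
      by (simp add: hermite_gauss_def gauss_exp_Complex)
  qed
  then show ?thesis
    unfolding gauss_fourier_coeff_def hermite_gauss_moment_def \<theta>_def[symmetric] D_def[symmetric]
    by simp
qed

lemma sqrt_gauss_normalization:
  fixes c :: real
  assumes "c > 0"
  shows "sqrt (2 * pi / c) / sqrt (sqrt pi * 2 ^ n * fact n) = pi powr (1/4) / sqrt (c * 2 powr (real n - 1) * fact n)"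
proof -
  have "pi powr (1/4) = (pi powr (1/2)) powr (1/2)"
    by (simp add: powr_powr)
  then have "pi powr (1/4) = sqrt (sqrt pi)"
    by (simp add: powr_half_sqrt)
  moreover have "(2 * pi / c) / (sqrt pi * 2 ^ n * fact n) = sqrt pi / (c * 2 powr (real n - 1) * fact n)"
  proof -
    have "2 * pi = 2 * sqrt pi * sqrt pi"
      by simp
    then show ?thesis
      using assms by (simp add: powr_diff powr_realpow field_simps)
  qed
  ultimately show ?thesis
    by (simp add: real_sqrt_divide[symmetric])
qed

lemma norm_gauss_fourier_coeff:
  assumes \<sigma>: "\<sigma> > 0" and c: "c = (\<sigma>\<^sup>2 + 1) / \<sigma>\<^sup>2" and s: "s = 1 \<or> s = -1"
  shows "cmod (gauss_fourier_coeff n \<mu> \<sigma> L \<epsilon> s m) =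
    pi powr (1/4) * exp (- \<mu>\<^sup>2 / (2 * \<sigma>\<^sup>2) + \<mu>\<^sup>2 / (2 * c * \<sigma> ^ 4)) / sqrt (c * 2 powr (real n - 1) * fact n)
    * exp (- 2 * pi\<^sup>2 / (L\<^sup>2 * \<epsilon>\<^sup>2 * c) * (real m)\<^sup>2)
    * cmod (gen_hermite (2 * Complex (\<mu> / \<sigma>\<^sup>2) (s * (2 * pi / L) * real m / \<epsilon>) / of_real c) (2 / c - 1) n)"
proof -
  have c0: "c > 0"
    using \<sigma> unfolding c by (simp add: add_pos_nonneg)
  define w where "w = Complex (\<mu> / \<sigma>\<^sup>2) (s * (2 * pi / L) * real m / \<epsilon>)"
  have "Re (w\<^sup>2 / (2 * c)) = \<mu>\<^sup>2 / (2 * c * \<sigma> ^ 4) + (- 2 * pi\<^sup>2 / (L\<^sup>2 * \<epsilon>\<^sup>2 * c) * (real m)\<^sup>2)"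
    using s c0 by (elim disjE) (simp_all add: w_def power2_eq_square power4_eq_xxxx Re_divide field_simps)
  then have J0: "cmod (hermite_gauss_moment c w 0) = sqrt (2 * pi / c) * exp (\<mu>\<^sup>2 / (2 * c * \<sigma> ^ 4))
      * exp (- 2 * pi\<^sup>2 / (L\<^sup>2 * \<epsilon>\<^sup>2 * c) * (real m)\<^sup>2)"
    using c0 by (simp add: hermite_gauss_moment_0[OF c0] norm_mult flip: exp_add)
  have "cmod (gauss_fourier_coeff n \<mu> \<sigma> L \<epsilon> s m) = exp (- \<mu>\<^sup>2 / (2 * \<sigma>\<^sup>2)) / sqrt (sqrt pi * 2 ^ n * fact n)
      * cmod (hermite_gauss_moment c w 0) * cmod (gen_hermite (2 * w / of_real c) (2 / c - 1) n)"
    unfolding gauss_fourier_coeff_eq_moment[OF \<sigma> c] w_def[symmetric]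
      hermite_gauss_moment_eq_gen_hermite[OF c0, of w n]
    by (simp add: norm_mult norm_divide)
  also have "\<dots> = sqrt (2 * pi / c) / sqrt (sqrt pi * 2 ^ n * fact n)
      * (exp (- \<mu>\<^sup>2 / (2 * \<sigma>\<^sup>2)) * exp (\<mu>\<^sup>2 / (2 * c * \<sigma> ^ 4)))
      * exp (- 2 * pi\<^sup>2 / (L\<^sup>2 * \<epsilon>\<^sup>2 * c) * (real m)\<^sup>2) * cmod (gen_hermite (2 * w / of_real c) (2 / c - 1) n)"
    unfolding J0 by (simp add: field_simps)
  finally show ?thesis
    by (simp only: sqrt_gauss_normalization[OF c0] exp_add[symmetric] w_def) (simp add: field_simps)
qed

section \<open>Gaussian series\<close>

lemma four_mult_exp_le_exp_four_mult:
  fixes a :: real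
  assumes "0 \<le> a"
  shows "4 * a * exp a \<le> exp (4 * a) - 1"
proof -
  have "(1 + 3 * a / 2)\<^sup>2 \<le> exp (3 * a)"
    using exp_ge_one_plus_x_over_n_power_n[of 2 "3 * a"] assms by simp
  then have "1 - a + 9 / 4 * a\<^sup>2 \<le> exp (3 * a) - 4 * a"
    by (simp add: power2_eq_square algebra_simps)
  moreover have "1 - a + 9 / 4 * a\<^sup>2 = (3 / 2 * a - 1 / 3)\<^sup>2 + 8 / 9"
    by (simp add: power2_eq_square algebra_simps)
  then have "0 \<le> 1 - a + 9 / 4 * a\<^sup>2"
    by (metis add_nonneg_nonneg zero_le_power2 zero_le_divide_iff zero_le_numeral)
  ultimately have "(1 + a) * (1 - a + 9 / 4 * a\<^sup>2) \<le> exp a * (exp (3 * a) - 4 * a)"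
    using assms by (intro mult_mono) auto
  moreover have "(1 + a) * (1 - a + 9 / 4 * a\<^sup>2) = 1 + 5 / 4 * a\<^sup>2 + 9 / 4 * a ^ 3"
    by (simp add: power2_eq_square power3_eq_cube algebra_simps)
  moreover have "exp a * (exp (3 * a) - 4 * a) = exp (4 * a) - 4 * a * exp a"
    by (simp add: algebra_simps flip: exp_add)
  moreover have "0 \<le> a\<^sup>2" "0 \<le> a ^ 3"
    using assms by simp_all
  ultimately show ?thesis
    by linarith
qed

text \<open>Beyond its first term, \<open>\<Sum> exp (-a k\<^sup>2)\<close> is dominated by the geometric series with
  ratio \<open>exp (-4a)\<close>, since \<open>k\<^sup>2 \<ge> 4 (k - 1)\<close>.\<close>
lemma gauss_tail_le:
  fixes a :: real
  assumes a: "a > 0"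
  shows "summable (\<lambda>k. exp (- a * (real (Suc k))\<^sup>2))"
    and "(\<Sum>k. exp (- a * (real (Suc k))\<^sup>2)) \<le> exp (- a) * (1 + 1 / (4 * a))"
proof -
  define f where "f k = exp (- a * (real (Suc k))\<^sup>2)" for k
  define q where "q = exp (- 4 * a)"
  have q: "0 < q" "q < 1"
    using a by (auto simp: q_def)
  have f_Suc_le: "f (Suc k) \<le> q * q ^ k" for k
  proof -
    have "4 * real (Suc k) \<le> (real (Suc (Suc k)))\<^sup>2"
      using sum_squares_ge_zero[of "real k" 0] by (simp add: power2_eq_square algebra_simps)
    then have "a * (4 * real (Suc k)) \<le> a * (real (Suc (Suc k)))\<^sup>2"
      using a by (intro mult_left_mono) auto
    then have "- a * (real (Suc (Suc k)))\<^sup>2 \<le> real (Suc k) * (- 4 * a)"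
      by (simp add: algebra_simps)
    moreover have "q * q ^ k = exp (real (Suc k) * (- 4 * a))"
      by (simp only: q_def exp_of_nat_mult power_Suc)
    ultimately show ?thesis
      by (simp add: f_def)
  qed
  have "summable (\<lambda>k. q * q ^ k)"
    using q by simp
  then have summable_f_Suc: "summable (\<lambda>k. f (Suc k))"
    by (rule summable_comparison_test'[where N = 0]) (use f_Suc_le in \<open>simp add: f_def\<close>)
  then have "summable f"
    by (simp only: summable_Suc_iff)
  then show "summable (\<lambda>k. exp (- a * (real (Suc k))\<^sup>2))"
    unfolding f_def[abs_def] .
  have "(\<Sum>k. f k) = f 0 + (\<Sum>k. f (Suc k))"
    using suminf_split_head[OF summable_f_Suc[unfolded summable_Suc_iff]] by simp
  also have "(\<Sum>k. f (Suc k)) \<le> (\<Sum>k. q * q ^ k)"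
    using q by (intro suminf_le f_Suc_le summable_f_Suc) simp
  also have "(\<Sum>k. q * q ^ k) = q / (1 - q)"
    using q by (simp add: suminf_mult suminf_geometric)
  also have "\<dots> = 1 / (exp (4 * a) - 1)"
    using a by (simp add: q_def exp_minus field_simps)
  also have "\<dots> \<le> exp (- a) / (4 * a)"
    using four_mult_exp_le_exp_four_mult[of a] a by (simp add: exp_minus field_simps)
  finally show "(\<Sum>k. exp (- a * (real (Suc k))\<^sup>2)) \<le> exp (- a) * (1 + 1 / (4 * a))"
    by (simp add: f_def distrib_left)
qed

lemma Suc_power_mult_exp_gauss_le:
  fixes a :: real
  assumes n: "1 \<le> n" and a: "real n \<le> a"
  shows "real (Suc k) ^ n * exp (- a * (real (Suc k))\<^sup>2) \<le> exp (- a) * exp (- 2) ^ k"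
proof -
  define K where "K = real k"
  define B where "B = (K + 1) * exp (- (K\<^sup>2 + 2 * K))"
  have K: "0 \<le> K" "K \<le> K\<^sup>2"
    using le_square[of k] unfolding K_def power2_eq_square of_nat_mult[symmetric] of_nat_le_iff by auto
  have "K + 1 \<le> exp K"
    using exp_ge_add_one_self[of K] by linarith
  then have "B \<le> exp K * exp (- (K\<^sup>2 + 2 * K))"
    unfolding B_def by (intro mult_right_mono) auto
  also have "\<dots> \<le> exp (- 2 * K)"
    using K by (simp flip: exp_add)
  finally have B_le: "B \<le> exp (- 2 * K)" .
  have "(K + 1) ^ n * exp (- a * (K\<^sup>2 + 2 * K)) \<le> (K + 1) ^ n * exp (- real n * (K\<^sup>2 + 2 * K))"
    using a K by (intro mult_left_mono) (auto intro: mult_right_mono)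
  also have "\<dots> = B ^ n"
    by (simp only: B_def power_mult_distrib exp_of_nat_mult[symmetric]) (simp add: algebra_simps)
  also have "\<dots> \<le> B"
    using B_le K n by (intro power_decreasing[of 1 n B, simplified]) (auto simp: B_def intro: order_trans)
  also have "\<dots> \<le> exp (- 2) ^ k"
    using B_le by (simp add: K_def mult.commute flip: exp_of_nat_mult)
  finally have "(K + 1) ^ n * exp (- a * (K\<^sup>2 + 2 * K)) \<le> exp (- 2) ^ k" .
  moreover have "real (Suc k) ^ n * exp (- a * (real (Suc k))\<^sup>2)
      = exp (- a) * ((K + 1) ^ n * exp (- a * (K\<^sup>2 + 2 * K)))"
    by (simp add: K_def exp_add[symmetric] power2_eq_square algebra_simps)
  ultimately show ?thesis
    by simp
qed

lemma gauss_moment_tail_le: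
  fixes a :: real
  assumes n: "1 \<le> n" and a: "real n \<le> a"
  shows "summable (\<lambda>k. real (Suc k) ^ n * exp (- a * (real (Suc k))\<^sup>2))"
    and "(\<Sum>k. real (Suc k) ^ n * exp (- a * (real (Suc k))\<^sup>2)) \<le> 3 / 2 * exp (- a)"
proof -
  note term_le = Suc_power_mult_exp_gauss_le[OF n a]
  have geometric: "summable (\<lambda>k. exp (- a) * exp (- 2 :: real) ^ k)"
    by simp
  show summable: "summable (\<lambda>k. real (Suc k) ^ n * exp (- a * (real (Suc k))\<^sup>2))"
    using geometric by (rule summable_comparison_test'[where N = 0]) (use term_le in simp)
  have "(\<Sum>k. real (Suc k) ^ n * exp (- a * (real (Suc k))\<^sup>2)) \<le> (\<Sum>k. exp (- a) * exp (- 2 :: real) ^ k)"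
    using summable geometric by (intro suminf_le term_le)
  also have "\<dots> = exp (- a) / (1 - exp (- 2))"
    by (simp add: suminf_mult suminf_geometric)
  also have "\<dots> \<le> 3 / 2 * exp (- a)"
  proof -
    have "3 \<le> exp (2 :: real)"
      using exp_ge_add_one_self[of 2] by simp
    then show ?thesis
      by (simp add: exp_minus field_simps)
  qed
  finally show "(\<Sum>k. real (Suc k) ^ n * exp (- a * (real (Suc k))\<^sup>2)) \<le> 3 / 2 * exp (- a)" .
qed

lemma gauss_tail_constants_le:
  fixes a X Y :: real
  assumes a: "a > 0" and X: "0 \<le> X" and Y: "0 \<le> Y" and Y_le_X: "n = 0 \<Longrightarrow> Y \<le> X"
  shows "X * (1 + 1 / (4 * a)) + Y * (if n = 0 then 1 + 1 / (4 * a) else 3 / 2)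
    \<le> X * (1 + 1 / (2 * a)) + Y * (1 + exp (real n - 1) / 2)"
proof (cases "n = 0")
  case True
  have "Y / (4 * a) \<le> X / (4 * a)"
    using Y_le_X True a by (intro divide_right_mono) auto
  moreover have "0 \<le> Y * exp (real n - 1) / 2"
    using Y by simp
  moreover have "X * (1 + 1 / (4 * a)) + Y * (1 + 1 / (4 * a)) = X + Y + X / (4 * a) + Y / (4 * a)"
    "X * (1 + 1 / (2 * a)) + Y * (1 + exp (real n - 1) / 2)
      = X + Y + X / (4 * a) + X / (4 * a) + Y * exp (real n - 1) / 2"
    using a by (simp_all add: field_simps)
  ultimately show ?thesis
    using True by simp
next
  case False
  have "X * (1 + 1 / (4 * a)) \<le> X * (1 + 1 / (2 * a))"
    using X a by (intro mult_left_mono) (auto simp: frac_le)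
  moreover have "Y * (3 / 2) \<le> Y * (1 + exp (real n - 1) / 2)"
    using Y False by (intro mult_left_mono) auto
  ultimately show ?thesis
    using False by simp
qed

lemma gauss_weighted_tail_le:
  fixes a X Y :: real
  assumes n: "real n < a" and X: "0 \<le> X" and Y: "0 \<le> Y" and Y_le_X: "n = 0 \<Longrightarrow> Y \<le> X"
  shows "summable (\<lambda>k. exp (- a * (real (Suc k))\<^sup>2) * (X + Y * real (Suc k) ^ n))"
    and "(\<Sum>k. exp (- a * (real (Suc k))\<^sup>2) * (X + Y * real (Suc k) ^ n))
      \<le> exp (- a) * (X * (1 + 1 / (2 * a)) + Y * (1 + exp (real n - 1) / 2))"
proof -
  have a: "a > 0"
    using n by linarith
  define g where "g k = exp (- a * (real (Suc k))\<^sup>2)" for k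
  define h where "h k = real (Suc k) ^ n * g k" for k
  have g: "summable g" "suminf g \<le> exp (- a) * (1 + 1 / (4 * a))"
    using gauss_tail_le[OF a] by (simp_all add: g_def[abs_def])
  have "summable h \<and> suminf h \<le> exp (- a) * (if n = 0 then 1 + 1 / (4 * a) else 3 / 2)"
  proof (cases "n = 0")
    case True
    then have "h = g"
      by (simp add: fun_eq_iff h_def)
    then show ?thesis
      using g True by simp
  next
    case False
    then show ?thesis
      using gauss_moment_tail_le[of n a] n by (simp add: h_def[abs_def] g_def mult.commute)
  qed
  then have h: "summable h" "suminf h \<le> exp (- a) * (if n = 0 then 1 + 1 / (4 * a) else 3 / 2)"
    by simp_all
  have split: "(\<lambda>k. exp (- a * (real (Suc k))\<^sup>2) * (X + Y * real (Suc k) ^ n)) = (\<lambda>k. X * g k + Y * h k)"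
    by (simp add: fun_eq_iff g_def h_def algebra_simps)
  show "summable (\<lambda>k. exp (- a * (real (Suc k))\<^sup>2) * (X + Y * real (Suc k) ^ n))"
    unfolding split using g h by (intro summable_add summable_mult)
  have "(\<Sum>k. exp (- a * (real (Suc k))\<^sup>2) * (X + Y * real (Suc k) ^ n)) = X * suminf g + Y * suminf h"
    unfolding split using g h by (simp add: suminf_add[symmetric] suminf_mult)
  also have "\<dots> \<le> X * (exp (- a) * (1 + 1 / (4 * a))) + Y * (exp (- a) * (if n = 0 then 1 + 1 / (4 * a) else 3 / 2))"
    using g h X Y by (intro add_mono mult_left_mono) auto
  also have "\<dots> = exp (- a) * (X * (1 + 1 / (4 * a)) + Y * (if n = 0 then 1 + 1 / (4 * a) else 3 / 2))"
    by (simp only: algebra_simps)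
  also have "\<dots> \<le> exp (- a) * (X * (1 + 1 / (2 * a)) + Y * (1 + exp (real n - 1) / 2))"
    using gauss_tail_constants_le[of a X Y n] a X Y Y_le_X by (intro mult_left_mono) auto
  finally show "(\<Sum>k. exp (- a * (real (Suc k))\<^sup>2) * (X + Y * real (Suc k) ^ n))
      \<le> exp (- a) * (X * (1 + 1 / (2 * a)) + Y * (1 + exp (real n - 1) / 2))" .
qed

lemma norm_gauss_fourier_frequency_le:
  fixes \<mu> \<sigma> L \<epsilon> c s :: real
  assumes "\<sigma> > 0" "L > 0" "\<epsilon> > 0" "c > 0" "s = 1 \<or> s = -1"
  shows "cmod (2 * Complex (\<mu> / \<sigma>\<^sup>2) (s * (2 * pi / L) * real m / \<epsilon>) / of_real c)
    \<le> 2 * (\<bar>\<mu>\<bar> / (c * \<sigma>\<^sup>2) + 2 * pi / (L * \<epsilon> * c) * real m)"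
proof -
  define \<theta> where "\<theta> = s * (2 * pi / L) * real m / \<epsilon>"
  have "cmod (2 * Complex (\<mu> / \<sigma>\<^sup>2) \<theta> / of_real c) = 2 / c * cmod (Complex (\<mu> / \<sigma>\<^sup>2) \<theta>)"
    using assms by (simp add: norm_divide norm_mult)
  also have "\<dots> \<le> 2 / c * (\<bar>\<mu> / \<sigma>\<^sup>2\<bar> + \<bar>\<theta>\<bar>)"
    using cmod_le[of "Complex (\<mu> / \<sigma>\<^sup>2) \<theta>"] assms by (intro mult_left_mono) auto
  also have "\<bar>\<theta>\<bar> = 2 * pi / (L * \<epsilon>) * real m"
    using assms by (auto simp: \<theta>_def abs_mult)
  also have "2 / c * (\<bar>\<mu> / \<sigma>\<^sup>2\<bar> + 2 * pi / (L * \<epsilon>) * real m)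
      = 2 * (\<bar>\<mu>\<bar> / (c * \<sigma>\<^sup>2) + 2 * pi / (L * \<epsilon> * c) * real m)"
    using assms by (simp add: field_simps)
  finally show ?thesis
    by (simp add: \<theta>_def)
qed

lemma gauss_fourier_coeff_series_le:
  fixes \<mu> \<sigma> L \<epsilon> c s K X Y :: real and n :: nat
  assumes \<sigma>: "\<sigma> > 0" and L: "L > 0" and \<epsilon>: "\<epsilon> > 0" and c: "c = (\<sigma>\<^sup>2 + 1) / \<sigma>\<^sup>2"
    and n: "real n < 2 * pi\<^sup>2 / (L\<^sup>2 * \<epsilon>\<^sup>2 * c)" and s: "s = 1 \<or> s = -1"
    and K: "0 \<le> K" and X: "0 \<le> X" and Y: "0 \<le> Y" and Y_le_X: "n = 0 \<Longrightarrow> Y \<le> X"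
    and gen_hermite_le: "\<And>m p. cmod p \<le> 2 * (\<bar>\<mu>\<bar> / (c * \<sigma>\<^sup>2) + 2 * pi / (L * \<epsilon> * c) * real m) \<Longrightarrow>
      cmod (gen_hermite p (2 / c - 1) n) \<le> K * (X + Y * real m ^ n)"
  shows "summable (\<lambda>k. cmod (gauss_fourier_coeff n \<mu> \<sigma> L \<epsilon> s (Suc k))) \<and>
    (\<Sum>k. cmod (gauss_fourier_coeff n \<mu> \<sigma> L \<epsilon> s (Suc k)))
      \<le> pi powr (1/4) * K * exp (- \<mu>\<^sup>2 / (2 * \<sigma>\<^sup>2) + \<mu>\<^sup>2 / (2 * c * \<sigma> ^ 4))
          / sqrt (c * 2 powr (real n - 1) * fact n)
        * exp (- 2 * pi\<^sup>2 / (L\<^sup>2 * \<epsilon>\<^sup>2 * c))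
        * (X * (1 + L\<^sup>2 * \<epsilon>\<^sup>2 * c / (4 * pi\<^sup>2)) + Y * (1 + exp (real n - 1) / 2))"
proof -
  have c0: "c > 0"
    using \<sigma> unfolding c by (simp add: add_pos_nonneg)
  define a where "a = 2 * pi\<^sup>2 / (L\<^sup>2 * \<epsilon>\<^sup>2 * c)"
  have a: "a > 0"
    using L \<epsilon> c0 by (simp add: a_def)
  define P where "P = pi powr (1/4) * exp (- \<mu>\<^sup>2 / (2 * \<sigma>\<^sup>2) + \<mu>\<^sup>2 / (2 * c * \<sigma> ^ 4))
    / sqrt (c * 2 powr (real n - 1) * fact n)"
  have PK: "0 \<le> P * K"
    using c0 K by (simp add: P_def)
  define g where "g k = exp (- a * (real (Suc k))\<^sup>2) * (X + Y * real (Suc k) ^ n)" for k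
  have g: "summable g" "suminf g \<le> exp (- a) * (X * (1 + 1 / (2 * a)) + Y * (1 + exp (real n - 1) / 2))"
    using gauss_weighted_tail_le[of n a X Y] n X Y Y_le_X by (simp_all add: a_def g_def[abs_def])
  have coeff_le: "cmod (gauss_fourier_coeff n \<mu> \<sigma> L \<epsilon> s (Suc k)) \<le> P * K * g k" for k
  proof -
    let ?R = "gen_hermite (2 * Complex (\<mu> / \<sigma>\<^sup>2) (s * (2 * pi / L) * real (Suc k) / \<epsilon>) / of_real c) (2 / c - 1) n"
    have "cmod ?R \<le> K * (X + Y * real (Suc k) ^ n)"
      by (rule gen_hermite_le norm_gauss_fourier_frequency_le)+ (use \<sigma> L \<epsilon> c0 s in auto)
    moreover have "cmod (gauss_fourier_coeff n \<mu> \<sigma> L \<epsilon> s (Suc k)) = P * exp (- a * (real (Suc k))\<^sup>2) * cmod ?R"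
      unfolding norm_gauss_fourier_coeff[OF \<sigma> c s] P_def a_def by simp
    moreover have "0 \<le> P * exp (- a * (real (Suc k))\<^sup>2)"
      using c0 by (simp add: P_def)
    ultimately have "cmod (gauss_fourier_coeff n \<mu> \<sigma> L \<epsilon> s (Suc k))
        \<le> P * exp (- a * (real (Suc k))\<^sup>2) * (K * (X + Y * real (Suc k) ^ n))"
      by (metis mult_left_mono)
    then show ?thesis
      by (simp add: g_def mult_ac)
  qed
  have summable: "summable (\<lambda>k. cmod (gauss_fourier_coeff n \<mu> \<sigma> L \<epsilon> s (Suc k)))"
    by (rule summable_comparison_test'[where N = 0, OF summable_mult[OF g(1), of "P * K"]]) (simp add: coeff_le)
  have "(\<Sum>k. cmod (gauss_fourier_coeff n \<mu> \<sigma> L \<epsilon> s (Suc k))) \<le> (\<Sum>k. P * K * g k)"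
    by (intro suminf_le coeff_le summable summable_mult g(1))
  also have "\<dots> \<le> P * K * (exp (- a) * (X * (1 + 1 / (2 * a)) + Y * (1 + exp (real n - 1) / 2)))"
    using g PK by (simp add: suminf_mult mult_left_mono)
  also have "1 / (2 * a) = L\<^sup>2 * \<epsilon>\<^sup>2 * c / (4 * pi\<^sup>2)"
    using L \<epsilon> c0 by (simp add: a_def field_simps)
  finally show ?thesis
    using summable by (simp add: P_def a_def mult_ac)
qed

lemma gauss_fourier_coeff_series_le_general:
  fixes \<mu> \<sigma> L \<epsilon> c s :: real and n :: nat
  assumes \<sigma>: "\<sigma> > 0" and L: "L > 0" and \<epsilon>: "\<epsilon> > 0" and c: "c = (\<sigma>\<^sup>2 + 1) / \<sigma>\<^sup>2"
    and n: "real n < 2 * pi\<^sup>2 / (L\<^sup>2 * \<epsilon>\<^sup>2 * c)" and s: "s = 1 \<or> s = -1"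
  shows "summable (\<lambda>k. cmod (gauss_fourier_coeff n \<mu> \<sigma> L \<epsilon> s (Suc k))) \<and>
      (\<Sum>k. cmod (gauss_fourier_coeff n \<mu> \<sigma> L \<epsilon> s (Suc k)))
        \<le> (pi powr (1/4) * 4 ^ n * (1 + real n / 2)
             * exp (- \<mu>\<^sup>2 / (2 * \<sigma>\<^sup>2) + \<mu>\<^sup>2 / (2 * c * \<sigma> ^ 4))
             / sqrt (c * 2 powr (real n - 1) * fact n))
           * exp (- 2 * pi\<^sup>2 / (L\<^sup>2 * \<epsilon>\<^sup>2 * c))
           * ((sqrt 2 ^ n * sqrt (real n) ^ n * sqrt \<bar>2 / c - 1\<bar> ^ n
                + 2 powr (real n - 1) * (\<bar>\<mu>\<bar> / (c * \<sigma>\<^sup>2)) ^ n)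
                * (1 + L\<^sup>2 * \<epsilon>\<^sup>2 * c / (4 * pi\<^sup>2))
              + 2 powr (real n - 1) * (2 * pi / (L * \<epsilon> * c)) ^ n
                * (1 + exp (real n - 1) / 2))"
proof -
  have c0: "c > 0"
    using \<sigma> unfolding c by (simp add: add_pos_nonneg)
  have "summable (\<lambda>k. cmod (gauss_fourier_coeff n \<mu> \<sigma> L \<epsilon> s (Suc k))) \<and>
      (\<Sum>k. cmod (gauss_fourier_coeff n \<mu> \<sigma> L \<epsilon> s (Suc k)))
        \<le> pi powr (1/4) * (4 ^ n * (1 + real n / 2))
             * exp (- \<mu>\<^sup>2 / (2 * \<sigma>\<^sup>2) + \<mu>\<^sup>2 / (2 * c * \<sigma> ^ 4))
             / sqrt (c * 2 powr (real n - 1) * fact n)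
           * exp (- 2 * pi\<^sup>2 / (L\<^sup>2 * \<epsilon>\<^sup>2 * c))
           * ((sqrt 2 ^ n * sqrt (real n) ^ n * sqrt \<bar>2 / c - 1\<bar> ^ n
                + 2 powr (real n - 1) * (\<bar>\<mu>\<bar> / (c * \<sigma>\<^sup>2)) ^ n)
                * (1 + L\<^sup>2 * \<epsilon>\<^sup>2 * c / (4 * pi\<^sup>2))
              + 2 powr (real n - 1) * (2 * pi / (L * \<epsilon> * c)) ^ n
                * (1 + exp (real n - 1) / 2))"
  proof (rule gauss_fourier_coeff_series_le[OF assms])
    fix m :: nat and p :: complex
    assume p: "cmod p \<le> 2 * (\<bar>\<mu>\<bar> / (c * \<sigma>\<^sup>2) + 2 * pi / (L * \<epsilon> * c) * real m)"
    have "0 \<le> \<bar>\<mu>\<bar> / (c * \<sigma>\<^sup>2)" "0 \<le> 2 * pi / (L * \<epsilon> * c) * real m"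
      using c0 L \<epsilon> by auto
    from norm_gen_hermite_le_split[OF p this, of "2 / c - 1" n]
    show "cmod (gen_hermite p (2 / c - 1) n) \<le> 4 ^ n * (1 + real n / 2) *
      (sqrt 2 ^ n * sqrt (real n) ^ n * sqrt \<bar>2 / c - 1\<bar> ^ n + 2 powr (real n - 1) * (\<bar>\<mu>\<bar> / (c * \<sigma>\<^sup>2)) ^ n
        + 2 powr (real n - 1) * (2 * pi / (L * \<epsilon> * c)) ^ n * real m ^ n)"
      by (simp only: power_mult_distrib mult.assoc)
  qed (use c0 L \<epsilon> in auto)
  then show ?thesis
    by (simp only: mult.assoc)
qed

lemma gauss_fourier_coeff_series_le_unit_variance:
  fixes \<mu> \<sigma> L \<epsilon> c s :: real and n :: nat
  assumes \<sigma>: "\<sigma> > 0" and L: "L > 0" and \<epsilon>: "\<epsilon> > 0" and c: "c = (\<sigma>\<^sup>2 + 1) / \<sigma>\<^sup>2"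
    and n: "real n < 2 * pi\<^sup>2 / (L\<^sup>2 * \<epsilon>\<^sup>2 * c)" and s: "s = 1 \<or> s = -1"
    and unit: "\<sigma>\<^sup>2 = 1"
  shows "summable (\<lambda>k. cmod (gauss_fourier_coeff n \<mu> \<sigma> L \<epsilon> s (Suc k))) \<and>
      (\<Sum>k. cmod (gauss_fourier_coeff n \<mu> \<sigma> L \<epsilon> s (Suc k)))
        \<le> pi powr (1/4) * 2 powr (real n - 1) * exp (- \<mu>\<^sup>2 / 4) / sqrt (2 ^ n * fact n)
           * exp (- pi\<^sup>2 / (L\<^sup>2 * \<epsilon>\<^sup>2))
           * (\<bar>\<mu>\<bar> ^ n * (1 + L\<^sup>2 * \<epsilon>\<^sup>2 / (2 * pi\<^sup>2))
              + (2 * pi / (L * \<epsilon>)) ^ n * (1 + exp (real n - 1) / 2))"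
proof -
  have c2: "c = 2" and \<sigma>1: "\<sigma> = 1"
    using unit \<sigma> c by (simp_all add: power2_eq_1_iff)
  have "cmod (gen_hermite p (2 / c - 1) n) \<le> 2 powr (real n - 1) * (\<bar>\<mu>\<bar> ^ n + (2 * pi / (L * \<epsilon>)) ^ n * real m ^ n)"
    if "cmod p \<le> 2 * (\<bar>\<mu>\<bar> / (c * \<sigma>\<^sup>2) + 2 * pi / (L * \<epsilon> * c) * real m)" for p m
  proof -
    have "cmod p \<le> \<bar>\<mu>\<bar> + 2 * pi / (L * \<epsilon>) * real m"
      using that by (simp add: c2 \<sigma>1)
    then have "cmod p ^ n \<le> (\<bar>\<mu>\<bar> + 2 * pi / (L * \<epsilon>) * real m) ^ n"
      by (intro power_mono) auto
    also have "\<dots> \<le> 2 powr (real n - 1) * (\<bar>\<mu>\<bar> ^ n + (2 * pi / (L * \<epsilon>)) ^ n * real m ^ n)"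
      using power_add_le_two_powr[of "\<bar>\<mu>\<bar>" "2 * pi / (L * \<epsilon>) * real m" n] L \<epsilon>
      by (simp only: power_mult_distrib) simp
    finally show ?thesis
      by (simp add: c2 gen_hermite_zero norm_power)
  qed
  from gauss_fourier_coeff_series_le[OF assms(1-6) _ _ _ _ this] L \<epsilon>
  have "summable (\<lambda>k. cmod (gauss_fourier_coeff n \<mu> \<sigma> L \<epsilon> s (Suc k))) \<and>
      (\<Sum>k. cmod (gauss_fourier_coeff n \<mu> \<sigma> L \<epsilon> s (Suc k)))
        \<le> pi powr (1/4) * 2 powr (real n - 1) * exp (- \<mu>\<^sup>2 / 2 + \<mu>\<^sup>2 / 4) / sqrt (2 * 2 powr (real n - 1) * fact n)
          * exp (- 2 * pi\<^sup>2 / (L\<^sup>2 * \<epsilon>\<^sup>2 * 2))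
          * (\<bar>\<mu>\<bar> ^ n * (1 + L\<^sup>2 * \<epsilon>\<^sup>2 * 2 / (4 * pi\<^sup>2)) + (2 * pi / (L * \<epsilon>)) ^ n * (1 + exp (real n - 1) / 2))"
    by (simp add: c2 \<sigma>1)
  moreover have "2 * 2 powr (real n - 1) = (2 ^ n :: real)"
    by (simp add: powr_diff powr_realpow)
  moreover have "- \<mu>\<^sup>2 / 2 + \<mu>\<^sup>2 / 4 = - \<mu>\<^sup>2 / 4" "- 2 * pi\<^sup>2 / (L\<^sup>2 * \<epsilon>\<^sup>2 * 2) = - pi\<^sup>2 / (L\<^sup>2 * \<epsilon>\<^sup>2)"
    "L\<^sup>2 * \<epsilon>\<^sup>2 * 2 / (4 * pi\<^sup>2) = L\<^sup>2 * \<epsilon>\<^sup>2 / (2 * pi\<^sup>2)"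
    by simp_all
  ultimately show ?thesis
    by (simp only: mult.assoc)
qed

theorem lemma4p4:
  fixes \<mu> \<sigma> L \<epsilon> c s :: real and n :: nat
  assumes "\<sigma> > 0" and "L > 0" and "\<epsilon> > 0"
    and "c = (\<sigma>\<^sup>2 + 1) / \<sigma>\<^sup>2"
    and "real n < 2 * pi\<^sup>2 / (L\<^sup>2 * \<epsilon>\<^sup>2 * c)"
    and "s = 1 \<or> s = -1"
  shows
   "(\<sigma>\<^sup>2 \<noteq> 1 \<longrightarrow>
      summable (\<lambda>k. cmod (gauss_fourier_coeff n \<mu> \<sigma> L \<epsilon> s (Suc k))) \<and>
      (\<Sum>k. cmod (gauss_fourier_coeff n \<mu> \<sigma> L \<epsilon> s (Suc k)))
        \<le> (pi powr (1/4) * 4 ^ n * (1 + real n / 2)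
             * exp (- \<mu>\<^sup>2 / (2 * \<sigma>\<^sup>2) + \<mu>\<^sup>2 / (2 * c * \<sigma> ^ 4))
             / sqrt (c * 2 powr (real n - 1) * fact n))
           * exp (- 2 * pi\<^sup>2 / (L\<^sup>2 * \<epsilon>\<^sup>2 * c))
           * ((sqrt 2 ^ n * sqrt (real n) ^ n * sqrt \<bar>2 / c - 1\<bar> ^ n
                + 2 powr (real n - 1) * (\<bar>\<mu>\<bar> / (c * \<sigma>\<^sup>2)) ^ n)
                * (1 + L\<^sup>2 * \<epsilon>\<^sup>2 * c / (4 * pi\<^sup>2))
              + 2 powr (real n - 1) * (2 * pi / (L * \<epsilon> * c)) ^ n
                * (1 + exp (real n - 1) / 2))) \<and>
    (\<sigma>\<^sup>2 = 1 \<longrightarrow>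
      summable (\<lambda>k. cmod (gauss_fourier_coeff n \<mu> \<sigma> L \<epsilon> s (Suc k))) \<and>
      (\<Sum>k. cmod (gauss_fourier_coeff n \<mu> \<sigma> L \<epsilon> s (Suc k)))
        \<le> pi powr (1/4) * 2 powr (real n - 1) * exp (- \<mu>\<^sup>2 / 4) / sqrt (2 ^ n * fact n)
           * exp (- pi\<^sup>2 / (L\<^sup>2 * \<epsilon>\<^sup>2))
           * (\<bar>\<mu>\<bar> ^ n * (1 + L\<^sup>2 * \<epsilon>\<^sup>2 / (2 * pi\<^sup>2))
              + (2 * pi / (L * \<epsilon>)) ^ n * (1 + exp (real n - 1) / 2)))"
  using gauss_fourier_coeff_series_le_general[OF assms, of \<mu>]
    gauss_fourier_coeff_series_le_unit_variance[OF assms, of \<mu>]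
  by blast

end
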